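(* Let $b=(b_1,\ldots,b_n)$, $\alpha=(\alpha_1,\ldots,\alpha_n)$ and $\beta=(\beta_1,\ldots,\beta_n)$ be vectors of nonnegative integers, and let $d$ be an integer, such that $\alpha_1\le\alpha_2\le\cdots\le\alpha_n=d$, $\beta_1\le\beta_2\le\cdots\le\beta_n=d$, $\alpha_i\le\beta_i$ for all $i$, $\alpha_1=0$ and $\beta_1=b_1$. Let $I\subseteq S=K[x_1,\ldots,x_n]$ be the PLP-polymatroidal ideal of type $(\mathbf{0},b\mid\alpha,\beta)$, i.e. the ideal generated by all monomials $x^u=x_1^{u_1}\cdots x_n^{u_n}$ with $u\in\mathbb{Z}_{\ge0}^n$ satisfying $0\le u_i\le b_i$ and $\alpha_i\le u_1+\cdots+u_i\le\beta_i$ for $i=1,\ldots,n$. Then $\mathrm{Soc}^*(I)$ is generated, as a module over the Rees ring $R(I)$, by homogeneous elements of degree $<n$, and $\mathrm{Soc}(I)$ is generated, as an $\mathcal{F}(I)$-module, by homogeneous elements of degree $<n$.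
   Context: $K$ is a field and $\mathfrak{m}=(x_1,\ldots,x_n)$. The ideal $I$ is polymatroidal, generated in degree $d$, and all its powers $I^m$ are generated in degree $md$ and have linear resolutions. For each $m\ge1$, $\mathrm{soc}(I^m)$ denotes the ideal generated by all monomials $u$ of degree $md-1$ with $x_iu\in I^m$ for all $i$; one has $(I^m:\mathfrak{m})=I^m+\mathrm{soc}(I^m)$. The Rees ring is $R(I)=\bigoplus_{m\ge0}I^m$, and $\mathrm{Soc}^*(I)=\bigoplus_{m\ge1}\mathrm{soc}(I^m)$, graded with $\mathrm{soc}(I^m)$ in degree $m$, is a graded $R(I)$-module, elements of $I^r$ mapping $\mathrm{soc}(I^m)$ into $\mathrm{soc}(I^{m+r})$. The fiber cone is $\mathcal{F}(I)=\bigoplus_{m\ge0}I^m/\mathfrak{m}I^m$, and $\mathrm{Soc}(I)=\bigoplus_{m\ge0}(I^m:\mathfrak{m})/I^m$ is a graded $\mathcal{F}(I)$-module with $(I^m:\mathfrak{m})/I^m$ in degree $m$. *)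

theory Defs
  imports "HOL-Library.Poly_Mapping"
begin

text \<open>The ring S = K[x_1,...,x_n] is the subring of polynomials involving only the
variables with index in {0..<n} (variable x_(i+1) of the paper is index i).\<close>

type_synonym 'k mpoly = "(nat \<Rightarrow>\<^sub>0 nat) \<Rightarrow>\<^sub>0 'k"

definition Sring :: "nat \<Rightarrow> 'k::field mpoly set" where
  "Sring n = {p. \<forall>u \<in> Poly_Mapping.keys p. Poly_Mapping.keys u \<subseteq> {..<n}}"

definition monom :: "(nat \<Rightarrow>\<^sub>0 nat) \<Rightarrow> 'k::field mpoly" where
  "monom u = Poly_Mapping.single u 1"

definition var :: "nat \<Rightarrow> 'k::field mpoly" where
  "var i = monom (Poly_Mapping.single i 1)"

definition mdeg :: "(nat \<Rightarrow>\<^sub>0 nat) \<Rightarrow> nat" where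
  "mdeg u = (\<Sum>i\<in>Poly_Mapping.keys u. Poly_Mapping.lookup u i)"

definition ideal_gen :: "nat \<Rightarrow> 'k::field mpoly set \<Rightarrow> 'k mpoly set" where
  "ideal_gen n G = {(\<Sum>g\<in>F. c g * g) | F c. finite F \<and> F \<subseteq> G \<and> (\<forall>g\<in>F. c g \<in> Sring n)}"

definition ideal_mult :: "nat \<Rightarrow> 'k::field mpoly set \<Rightarrow> 'k mpoly set \<Rightarrow> 'k mpoly set" where
  "ideal_mult n A B = ideal_gen n {a * b | a b. a \<in> A \<and> b \<in> B}"

fun ideal_pow :: "nat \<Rightarrow> 'k::field mpoly set \<Rightarrow> nat \<Rightarrow> 'k mpoly set" where
  "ideal_pow n A 0 = Sring n"
| "ideal_pow n A (Suc m) = ideal_mult n (ideal_pow n A m) A"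

definition ideal_colon :: "nat \<Rightarrow> 'k::field mpoly set \<Rightarrow> 'k mpoly set \<Rightarrow> 'k mpoly set" where
  "ideal_colon n A B = {p \<in> Sring n. \<forall>b\<in>B. p * b \<in> A}"

definition max_ideal :: "nat \<Rightarrow> 'k::field mpoly set" where
  "max_ideal n = ideal_gen n {var i | i. i < n}"

text \<open>soc(I^m): generated by monomials u of degree m*d - 1 with x_i u in I^m for all i
 (for m*d = 0 there are no such monomials)\<close>
definition soc :: "nat \<Rightarrow> nat \<Rightarrow> 'k::field mpoly set \<Rightarrow> nat \<Rightarrow> 'k mpoly set" where
  "soc n d I m = ideal_gen n {monom u | u. Poly_Mapping.keys u \<subseteq> {..<n} \<and> mdeg u + 1 = m * d
       \<and> (\<forall>i<n. var i * monom u \<in> ideal_pow n I m)}"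

definition plp_ideal :: "nat \<Rightarrow> (nat \<Rightarrow> nat) \<Rightarrow> (nat \<Rightarrow> nat) \<Rightarrow> (nat \<Rightarrow> nat) \<Rightarrow> 'k::field mpoly set" where
  "plp_ideal n b \<alpha> \<beta> = ideal_gen n {monom u | u. Poly_Mapping.keys u \<subseteq> {..<n} \<and>
      (\<forall>i<n. Poly_Mapping.lookup u i \<le> b i \<and> \<alpha> i \<le> (\<Sum>j\<le>i. Poly_Mapping.lookup u j) \<and> (\<Sum>j\<le>i. Poly_Mapping.lookup u j) \<le> \<beta> i)}"

text \<open>Soc*(I) = (+)_{m>=1} soc(I^m) is generated as an R(I)-module by homogeneous elements
 of degree < N: every graded piece soc(I^m) is the sum of the images
 I^(m-k) soc(I^k) of the pieces of degree k < N (and 1 <= k <= m).\<close>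
definition Soc_star_gen_below :: "nat \<Rightarrow> nat \<Rightarrow> 'k::field mpoly set \<Rightarrow> nat \<Rightarrow> bool" where
  "Soc_star_gen_below n d I N \<longleftrightarrow> (\<forall>m\<ge>1. soc n d I m =
      ideal_gen n (\<Union>k\<in>{k. 1 \<le> k \<and> k \<le> m \<and> k < N}. ideal_mult n (ideal_pow n I (m - k)) (soc n d I k)))"

text \<open>Soc(I) = (+)_{m>=0} (I^m : m)/I^m is generated as an F(I)-module by homogeneous
 elements of degree < N: for every m, (I^m : m) = I^m + sum_{k<N, k<=m} I^(m-k) (I^k : m)
 (the degree-0 piece is zero; mI^(m-k) acts by zero modulo I^m).\<close>
definition Soc_gen_below :: "nat \<Rightarrow> 'k::field mpoly set \<Rightarrow> nat \<Rightarrow> bool" where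
  "Soc_gen_below n I N \<longleftrightarrow> (\<forall>m\<ge>1. ideal_colon n (ideal_pow n I m) (max_ideal n) =
      ideal_gen n (ideal_pow n I m \<union> (\<Union>k\<in>{k. 1 \<le> k \<and> k \<le> m \<and> k < N}.
         ideal_mult n (ideal_pow n I (m - k)) (ideal_colon n (ideal_pow n I k) (max_ideal n)))))"

end

theory Submission
  imports Defs "HOL-Library.Set_Algebras"
begin

text \<open>
  Monomial ideals correspond to up-closed sets of exponent vectors, so the statement is one about
  exponent sets. The generators of \<open>I\<^sup>m\<close> have the exponents \<open>G\<^sub>m\<close>, the lattice points of the
  \<open>m\<close>-th dilate of \<open>{u. u\<^sub>i \<le> b\<^sub>i, \<alpha>\<^sub>i \<le> u\<^sub>1 + \<dots> + u\<^sub>i \<le> \<beta>\<^sub>i}\<close>, and the generators of \<open>soc(I\<^sup>m)\<close>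
  are the \<open>x\<^sup>u\<close> with \<open>x\<^sub>i x\<^sup>u \<in> G\<^sub>m\<close> for all \<open>i\<close>. Two splitting results carry the proof:
  \<open>G\<^bsub>m+1\<^esub> = G\<^sub>m + G\<^sub>1\<close>, and for \<open>m \<ge> n\<close> every socle exponent of level \<open>m + 1\<close> is a socle
  exponent of level \<open>m\<close> plus an element of \<open>G\<^sub>1\<close>. In both, the partial sums of the summand from
  \<open>G\<^sub>1\<close> form an integer walk with prescribed bounds on values and steps. Such a walk exists once
  the bounds are pairwise consistent, and consistency follows by dividing the bounds met by the
  given vector by \<open>m + 1\<close>: the rounding error is at most \<open>m\<close>, which for socle exponents needs
  \<open>n \<le> m + 1\<close>. Iterating the second split writes every socle generator of level \<open>m\<close> as an
  element of \<open>I\<^bsup>m-k\<^esup>\<close> times a socle generator of level \<open>k < n\<close>. For \<open>Soc(I)\<close> one adds that the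
  elements of \<open>I\<^sup>m : (x\<^sub>1, \<dots>, x\<^sub>n)\<close> of degree \<open>\<ge> m d\<close> lie in \<open>I\<^sup>m\<close>, so the others are socle elements.
\<close>

section \<open>Exponent vectors\<close>

definition exps :: "nat \<Rightarrow> (nat \<Rightarrow>\<^sub>0 nat) set" where
  "exps n = {v. Poly_Mapping.keys v \<subseteq> {..<n}}"

definition exp_le :: "(nat \<Rightarrow>\<^sub>0 nat) \<Rightarrow> (nat \<Rightarrow>\<^sub>0 nat) \<Rightarrow> bool" where
  "exp_le v w \<longleftrightarrow> (\<forall>i. Poly_Mapping.lookup v i \<le> Poly_Mapping.lookup w i)"

definition up_closed :: "nat \<Rightarrow> (nat \<Rightarrow>\<^sub>0 nat) set \<Rightarrow> bool" where
  "up_closed n U \<longleftrightarrow> U \<subseteq> exps n \<and> (\<forall>v\<in>U. \<forall>w\<in>exps n. exp_le v w \<longrightarrow> w \<in> U)"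

definition up_closure :: "nat \<Rightarrow> (nat \<Rightarrow>\<^sub>0 nat) set \<Rightarrow> (nat \<Rightarrow>\<^sub>0 nat) set" where
  "up_closure n E = {w \<in> exps n. \<exists>e\<in>E. exp_le e w}"

definition unit_exp :: "nat \<Rightarrow> nat \<Rightarrow>\<^sub>0 nat" where
  "unit_exp i = Poly_Mapping.single i 1"

definition colon_exps :: "nat \<Rightarrow> (nat \<Rightarrow>\<^sub>0 nat) set \<Rightarrow> (nat \<Rightarrow>\<^sub>0 nat) set" where
  "colon_exps n U = {v \<in> exps n. \<forall>i<n. unit_exp i + v \<in> U}"

text \<open>Variables are indexed from \<open>0\<close>, so \<open>psum u (Suc i)\<close> is the paper's \<open>u\<^sub>1 + \<dots> + u\<^bsub>i+1\<^esub>\<close>.\<close>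

definition psum :: "(nat \<Rightarrow>\<^sub>0 nat) \<Rightarrow> nat \<Rightarrow> nat" where
  "psum v p = (\<Sum>j<p. Poly_Mapping.lookup v j)"

lemma keys_add_exp:
  "Poly_Mapping.keys (v + w) = Poly_Mapping.keys v \<union> Poly_Mapping.keys (w :: nat \<Rightarrow>\<^sub>0 nat)"
  by (auto simp: in_keys_iff lookup_add)

lemma exp_le_refl [simp]: "exp_le v v"
  by (simp add: exp_le_def)

lemma exp_le_trans: "exp_le u v \<Longrightarrow> exp_le v w \<Longrightarrow> exp_le u w"
  unfolding exp_le_def using order_trans by blast

lemma exp_le_add: "exp_le v w \<Longrightarrow> exp_le v' w' \<Longrightarrow> exp_le (v + v') (w + w')"
  by (simp add: exp_le_def lookup_add add_mono)

lemma exp_le_add_right: "exp_le v (v + w)"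
  by (simp add: exp_le_def lookup_add)

lemma exp_le_add_left: "exp_le v (w + v)"
  by (simp add: exp_le_def lookup_add)

lemma exp_le_zero: "exp_le 0 v"
  by (simp add: exp_le_def)

lemma exp_le_add_diff: "exp_le v w \<Longrightarrow> v + (w - v) = w"
  by (rule poly_mapping_eqI) (simp add: exp_le_def lookup_add lookup_minus)

lemma exps_add: "v \<in> exps n \<Longrightarrow> w \<in> exps n \<Longrightarrow> v + w \<in> exps n"
  by (simp add: exps_def keys_add_exp)

lemma keys_subset_exp_le:
  assumes "exp_le v w"
  shows "Poly_Mapping.keys v \<subseteq> Poly_Mapping.keys w"
proof
  fix i assume "i \<in> Poly_Mapping.keys v"
  moreover have "Poly_Mapping.lookup v i \<le> Poly_Mapping.lookup w i"
    using assms by (simp add: exp_le_def)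
  ultimately show "i \<in> Poly_Mapping.keys w"
    by (simp add: in_keys_iff)
qed

lemma exps_exp_le: "exp_le v w \<Longrightarrow> w \<in> exps n \<Longrightarrow> v \<in> exps n"
  unfolding exps_def using keys_subset_exp_le by blast

lemma exps_diff: "w \<in> exps n \<Longrightarrow> w - v \<in> exps n"
  by (rule exps_exp_le[of _ w]) (simp_all add: exp_le_def lookup_minus)

lemma unit_exp_exps: "i < n \<Longrightarrow> unit_exp i \<in> exps n"
  by (simp add: unit_exp_def exps_def)

lemma lookup_unit_exp_add:
  "Poly_Mapping.lookup (unit_exp i + v) j = Poly_Mapping.lookup v j + (if i = j then 1 else 0)"
  by (simp add: unit_exp_def lookup_add lookup_single when_def)

lemma up_closed_up_closure: "up_closed n (up_closure n E)"
  unfolding up_closed_def up_closure_def using exp_le_trans by blast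

lemma up_closure_mono: "A \<subseteq> B \<Longrightarrow> up_closure n A \<subseteq> up_closure n B"
  unfolding up_closure_def by blast

lemma subset_up_closure: "E \<subseteq> exps n \<Longrightarrow> E \<subseteq> up_closure n E"
  unfolding up_closure_def using exp_le_refl by blast

lemma colon_exps_mono: "U \<subseteq> V \<Longrightarrow> colon_exps n U \<subseteq> colon_exps n V"
  unfolding colon_exps_def by blast

lemma colon_exps_subset_exps: "colon_exps n U \<subseteq> exps n"
  by (auto simp: colon_exps_def)

lemma subset_colon_exps:
  assumes "up_closed n U"
  shows "U \<subseteq> colon_exps n U"
proof
  fix x assume x: "x \<in> U"
  then have "x \<in> exps n"
    using assms by (auto simp: up_closed_def)
  then have "unit_exp i + x \<in> U" if "i < n" for i
    using assms x that exps_add[OF unit_exp_exps] exp_le_add_left unfolding up_closed_def by blast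
  then show "x \<in> colon_exps n U"
    using \<open>x \<in> exps n\<close> by (simp add: colon_exps_def)
qed

lemma set_plus_colon_exps_subset:
  assumes "A \<subseteq> exps n"
  shows "A + colon_exps n B \<subseteq> colon_exps n (A + B)"
proof
  fix x assume "x \<in> A + colon_exps n B"
  then obtain a v where x: "x = a + v" "a \<in> A" "v \<in> colon_exps n B"
    by (auto elim: set_plus_elim)
  have "unit_exp i + x = a + (unit_exp i + v)" for i
    using x(1) by (simp add: ac_simps)
  then show "x \<in> colon_exps n (A + B)"
    using x assms exps_add unfolding colon_exps_def by auto
qed

lemma up_closure_UN: "up_closure n (\<Union>k\<in>K. A k) = (\<Union>k\<in>K. up_closure n (A k))"
  by (auto simp: up_closure_def)

lemma up_closed_Union: "(\<And>U. U \<in> \<U> \<Longrightarrow> up_closed n U) \<Longrightarrow> up_closed n (\<Union>\<U>)"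
  unfolding up_closed_def by blast

lemma up_closed_set_plus:
  assumes "up_closed n U" "up_closed n V"
  shows "up_closed n (U + V)"
  unfolding up_closed_def
proof safe
  fix x assume "x \<in> U + V"
  then obtain u v where "x = u + v" "u \<in> U" "v \<in> V"
    by (auto elim: set_plus_elim)
  then show "x \<in> exps n"
    using assms exps_add unfolding up_closed_def by blast
next
  fix x w assume "x \<in> U + V" "w \<in> exps n" "exp_le x w"
  then obtain u v where uv: "x = u + v" "u \<in> U" "v \<in> V"
    by (auto simp: set_plus_def)
  have "u + (w - x) \<in> U"
    using assms(1) uv(2) \<open>w \<in> exps n\<close> exps_add exps_diff exp_le_add_right
    unfolding up_closed_def by blast
  moreover have "w = (u + (w - x)) + v"
    using exp_le_add_diff[OF \<open>exp_le x w\<close>] uv(1) by (simp add: ac_simps)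
  ultimately show "w \<in> U + V"
    using uv(3) by (metis set_plus_intro)
qed

lemma up_closure_set_plus:
  assumes "A \<subseteq> exps n" "B \<subseteq> exps n"
  shows "up_closure n A + up_closure n B = up_closure n (A + B)"
proof
  show "up_closure n A + up_closure n B \<subseteq> up_closure n (A + B)"
  proof
    fix x assume "x \<in> up_closure n A + up_closure n B"
    then obtain u v where "x = u + v" "u \<in> up_closure n A" "v \<in> up_closure n B"
      by (auto elim: set_plus_elim)
    then obtain a c where "a \<in> A" "c \<in> B" "exp_le (a + c) x" "x \<in> exps n"
      unfolding up_closure_def using exp_le_add exps_add by blast
    then show "x \<in> up_closure n (A + B)"
      unfolding up_closure_def by blast
  qed
next
  show "up_closure n (A + B) \<subseteq> up_closure n A + up_closure n B"
  proof
    fix x assume "x \<in> up_closure n (A + B)"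
    then obtain a c where ac: "a \<in> A" "c \<in> B" "exp_le (a + c) x" "x \<in> exps n"
      by (auto simp: up_closure_def set_plus_def)
    have "a + (x - (a + c)) \<in> up_closure n A"
      unfolding up_closure_def using ac(1) assms(1) exps_add exps_diff[OF ac(4)] exp_le_add_right
      by blast
    moreover have "c \<in> up_closure n B"
      using ac(2) assms(2) subset_up_closure by blast
    moreover have "x = (a + (x - (a + c))) + c"
      using exp_le_add_diff[OF ac(3)] by (simp add: ac_simps)
    ultimately show "x \<in> up_closure n A + up_closure n B"
      by (metis set_plus_intro)
  qed
qed

lemma up_closed_colon_exps:
  assumes "up_closed n U"
  shows "up_closed n (colon_exps n U)"
  unfolding up_closed_def
proof safe
  fix v w assume v: "v \<in> colon_exps n U" and w: "w \<in> exps n" "exp_le v w"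
  have "unit_exp i + w \<in> U" if "i < n" for i
  proof -
    have "unit_exp i + v \<in> U"
      using v that by (simp add: colon_exps_def)
    moreover have "unit_exp i + w \<in> exps n"
      using w that by (simp add: exps_add unit_exp_exps)
    ultimately show ?thesis
      using assms exp_le_add[OF exp_le_refl w(2)] unfolding up_closed_def by blast
  qed
  then show "w \<in> colon_exps n U"
    using w by (simp add: colon_exps_def)
qed (simp add: colon_exps_def)

lemma colon_exps_plus_up_units_subset:
  assumes "up_closed n U"
  shows "colon_exps n U + up_closure n (unit_exp ` {..<n}) \<subseteq> U"
proof
  fix x assume "x \<in> colon_exps n U + up_closure n (unit_exp ` {..<n})"
  then obtain v w i where x: "x = v + w" "v \<in> colon_exps n U" "w \<in> exps n"
    and i: "i < n" "exp_le (unit_exp i) w"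
    unfolding up_closure_def by (auto elim!: set_plus_elim)
  have "unit_exp i + v \<in> U"
    using x(2) i(1) by (simp add: colon_exps_def)
  moreover have "exp_le (unit_exp i + v) x"
    using exp_le_add[OF i(2) exp_le_refl] x(1) by (simp add: add.commute)
  moreover have "x \<in> exps n"
    using x exps_add by (simp add: colon_exps_def)
  ultimately show "x \<in> U"
    using assms unfolding up_closed_def by blast
qed

lemma lookup_eq_0_if_exps: "v \<in> exps n \<Longrightarrow> n \<le> j \<Longrightarrow> Poly_Mapping.lookup v j = 0"
  by (auto simp: exps_def in_keys_iff)

lemma exp_le_if_lookup_le:
  assumes "v \<in> exps n" "\<And>j. j < n \<Longrightarrow> Poly_Mapping.lookup v j \<le> Poly_Mapping.lookup w j"
  shows "exp_le v w"
  unfolding exp_le_def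
proof
  fix j
  show "Poly_Mapping.lookup v j \<le> Poly_Mapping.lookup w j"
    using assms lookup_eq_0_if_exps[OF assms(1), of j] by (cases "j < n") auto
qed

lemma int_lookup_diff:
  "exp_le v w \<Longrightarrow> int (Poly_Mapping.lookup (w - v) j) = int (Poly_Mapping.lookup w j) - int (Poly_Mapping.lookup v j)"
  by (simp add: exp_le_def lookup_minus)

lemma psum_0 [simp]: "psum v 0 = 0"
  by (simp add: psum_def)

lemma psum_Suc: "psum v (Suc p) = psum v p + Poly_Mapping.lookup v p"
  by (simp add: psum_def)

lemma psum_add: "psum (v + w) p = psum v p + psum w p"
  by (simp add: psum_def lookup_add sum.distrib)

lemma psum_unit_exp_add: "psum (unit_exp i + v) p = psum v p + (if i < p then 1 else 0)"
  by (induction p) (auto simp: psum_Suc lookup_unit_exp_add)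

lemma psum_exp_le: "exp_le v w \<Longrightarrow> psum v p \<le> psum w p"
  unfolding psum_def exp_le_def by (rule sum_mono) blast

lemma psum_split: "a \<le> c \<Longrightarrow> psum v c = psum v a + (\<Sum>j=a..<c. Poly_Mapping.lookup v j)"
  unfolding psum_def lessThan_atLeast0 by (simp add: sum.atLeastLessThan_concat)

lemma psum_diff: "exp_le v w \<Longrightarrow> psum (w - v) p + psum v p = psum w p"
  by (metis add.commute exp_le_add_diff psum_add)

lemma int_psum_diff: "exp_le v w \<Longrightarrow> int (psum (w - v) p) = int (psum w p) - int (psum v p)"
  using psum_diff[of v w p] by (simp flip: of_nat_add)

lemma int_psum_split: "a \<le> c \<Longrightarrow> int (psum v c) = int (psum v a) + (\<Sum>j=a..<c. int (Poly_Mapping.lookup v j))"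
  by (simp add: psum_split)

lemma exp_le_eq_if_psum_eq:
  assumes "exp_le v w" "w \<in> exps n" "psum v n = psum w n"
  shows "v = w"
proof (rule poly_mapping_eqI)
  fix k
  show "Poly_Mapping.lookup v k = Poly_Mapping.lookup w k"
  proof (cases "k < n")
    case True
    then show ?thesis
      using sum_mono_inv[of "Poly_Mapping.lookup v" "{..<n}" "Poly_Mapping.lookup w" k] assms
      unfolding psum_def exp_le_def by auto
  next
    case False
    then have "k \<notin> Poly_Mapping.keys v" "k \<notin> Poly_Mapping.keys w"
      using assms(2) exps_exp_le[OF assms(1,2)] unfolding exps_def by auto
    then show ?thesis
      by (simp add: in_keys_iff)
  qed
qed

lemma mdeg_eq_psum: "v \<in> exps n \<Longrightarrow> mdeg v = psum v n"
  unfolding mdeg_def psum_def exps_def by (rule sum.mono_neutral_left) (auto simp: in_keys_iff)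

section \<open>Monomial ideals\<close>

definition supported_polys :: "(nat \<Rightarrow>\<^sub>0 nat) set \<Rightarrow> 'k::field mpoly set" where
  "supported_polys U = {f. Poly_Mapping.keys f \<subseteq> U}"

lemma Sring_eq_supported_polys: "Sring n = supported_polys (exps n)"
  by (auto simp: Sring_def supported_polys_def exps_def)

lemma keys_monom [simp]: "Poly_Mapping.keys (monom u :: 'k::field mpoly) = {u}"
  by (simp add: monom_def)

lemma monom_in_supported_polys [simp]: "(monom u :: 'k::field mpoly) \<in> supported_polys U \<longleftrightarrow> u \<in> U"
  by (simp add: supported_polys_def)

lemma monom_mult: "monom u * monom v = (monom (u + v) :: 'k::field mpoly)"
  by (simp add: monom_def mult_single)

lemma var_eq_monom: "var i = monom (unit_exp i)"
  by (simp add: var_def unit_exp_def)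

lemma keys_mult_supported:
  assumes "f \<in> supported_polys U" "g \<in> supported_polys V"
  shows "f * g \<in> supported_polys (U + V)"
  using assms keys_mult[of f g] unfolding supported_polys_def set_plus_def by blast

lemma Sring_mult: "f \<in> Sring n \<Longrightarrow> g \<in> Sring n \<Longrightarrow> f * g \<in> Sring n"
  using keys_mult[of f g] exps_add by (fastforce simp: Sring_eq_supported_polys supported_polys_def)

lemma Sring_add: "f \<in> Sring n \<Longrightarrow> g \<in> Sring n \<Longrightarrow> f + g \<in> Sring n"
  using keys_add[of f g] by (auto simp: Sring_def)

lemma ideal_gen_zero: "0 \<in> ideal_gen n G"
  unfolding ideal_gen_def by (rule CollectI, rule exI[of _ "{}"]) auto

lemma ideal_gen_base: "g \<in> G \<Longrightarrow> g \<in> ideal_gen n G"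
  unfolding ideal_gen_def
  by (rule CollectI, rule exI[of _ "{g}"], rule exI[of _ "\<lambda>_. 1"]) (auto simp: Sring_def)

lemma ideal_gen_add:
  assumes "f \<in> ideal_gen n G" "g \<in> ideal_gen n G"
  shows "f + g \<in> ideal_gen n G"
proof -
  obtain F1 c1 where 1: "f = (\<Sum>h\<in>F1. c1 h * h)" "finite F1" "F1 \<subseteq> G" "\<forall>h\<in>F1. c1 h \<in> Sring n"
    using assms(1) unfolding ideal_gen_def by blast
  obtain F2 c2 where 2: "g = (\<Sum>h\<in>F2. c2 h * h)" "finite F2" "F2 \<subseteq> G" "\<forall>h\<in>F2. c2 h \<in> Sring n"
    using assms(2) unfolding ideal_gen_def by blast
  define c where "c h = (if h \<in> F1 then c1 h else 0) + (if h \<in> F2 then c2 h else 0)" for h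
  have "(\<Sum>h\<in>F1 \<union> F2. (if h \<in> F1 then c1 h else 0) * h) = f"
    unfolding 1 by (rule sum.mono_neutral_cong_right) (use 1 2 in auto)
  moreover have "(\<Sum>h\<in>F1 \<union> F2. (if h \<in> F2 then c2 h else 0) * h) = g"
    unfolding 2 by (rule sum.mono_neutral_cong_right) (use 1 2 in auto)
  ultimately have "f + g = (\<Sum>h\<in>F1 \<union> F2. c h * h)"
    unfolding c_def distrib_right sum.distrib by simp
  moreover have "\<forall>h\<in>F1 \<union> F2. c h \<in> Sring n"
    using 1 2 by (auto simp: c_def intro!: Sring_add)
  ultimately show ?thesis
    unfolding ideal_gen_def using 1 2 by blast
qed

lemma ideal_gen_mult:
  assumes "c \<in> Sring n" "f \<in> ideal_gen n G"
  shows "c * f \<in> ideal_gen n G"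
proof -
  obtain F c1 where 1: "f = (\<Sum>h\<in>F. c1 h * h)" "finite F" "F \<subseteq> G" "\<forall>h\<in>F. c1 h \<in> Sring n"
    using assms(2) unfolding ideal_gen_def by blast
  have "c * f = (\<Sum>h\<in>F. (c * c1 h) * h)"
    unfolding 1 by (simp add: sum_distrib_left mult.assoc)
  moreover have "\<forall>h\<in>F. c * c1 h \<in> Sring n"
    using 1 assms(1) by (auto intro: Sring_mult)
  ultimately show ?thesis
    unfolding ideal_gen_def using 1(2,3)
    by (intro CollectI exI[of _ F] exI[of _ "\<lambda>h. c * c1 h"]) auto
qed

lemma ideal_gen_sum:
  "finite A \<Longrightarrow> (\<And>a. a \<in> A \<Longrightarrow> f a \<in> ideal_gen n G) \<Longrightarrow> sum f A \<in> ideal_gen n G"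
  by (induction A rule: finite_induct) (auto intro: ideal_gen_zero ideal_gen_add)

lemma poly_mapping_monomial_sum:
  "f = (\<Sum>v\<in>Poly_Mapping.keys f. Poly_Mapping.single v (Poly_Mapping.lookup f v))"
  by (rule poly_mapping_eqI) (auto simp: lookup_sum lookup_single when_def in_keys_iff)

lemma ideal_gen_eq_supported_polys:
  fixes G :: "'k::field mpoly set"
  assumes "up_closed n U" "G \<subseteq> supported_polys U"
    and "\<And>v. v \<in> U \<Longrightarrow> monom v \<in> ideal_gen n G"
  shows "ideal_gen n G = supported_polys U"
proof
  show "ideal_gen n G \<subseteq> supported_polys U"
  proof
    fix f assume "f \<in> ideal_gen n G"
    then obtain F c where 1: "f = (\<Sum>g\<in>F. c g * g)" "F \<subseteq> G" "\<forall>g\<in>F. c g \<in> Sring n"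
      unfolding ideal_gen_def by blast
    have "c g * g \<in> supported_polys (exps n + U)" if "g \<in> F" for g
      using keys_mult_supported 1 that assms(2) unfolding Sring_eq_supported_polys by blast
    moreover have "exps n + U \<subseteq> U"
      using assms(1) exps_add exp_le_add_left unfolding up_closed_def
      by (auto elim!: set_plus_elim)
    ultimately have "Poly_Mapping.keys (c g * g) \<subseteq> U" if "g \<in> F" for g
      using that unfolding supported_polys_def by blast
    then show "f \<in> supported_polys U"
      unfolding 1 supported_polys_def using keys_sum[of "\<lambda>g. c g * g" F] by blast
  qed
next
  show "supported_polys U \<subseteq> ideal_gen n G"
  proof
    fix f :: "'k mpoly" assume f: "f \<in> supported_polys U"
    have "Poly_Mapping.single v (Poly_Mapping.lookup f v) \<in> ideal_gen n G"
      if "v \<in> Poly_Mapping.keys f" for v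
    proof -
      have "Poly_Mapping.single 0 (Poly_Mapping.lookup f v) * monom v \<in> ideal_gen n G"
        using that f assms(3) by (intro ideal_gen_mult) (auto simp: Sring_def supported_polys_def)
      then show ?thesis
        by (simp add: monom_def mult_single)
    qed
    then show "f \<in> ideal_gen n G"
      by (subst poly_mapping_monomial_sum) (simp add: ideal_gen_sum)
  qed
qed

lemma ideal_gen_monoms:
  assumes "E \<subseteq> exps n"
  shows "ideal_gen n ((monom :: _ \<Rightarrow> 'k::field mpoly) ` E) = supported_polys (up_closure n E)"
proof (rule ideal_gen_eq_supported_polys[OF up_closed_up_closure])
  show "(monom :: _ \<Rightarrow> 'k mpoly) ` E \<subseteq> supported_polys (up_closure n E)"
    using subset_up_closure[OF assms] by auto
next
  fix v assume "v \<in> up_closure n E"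
  then obtain e where e: "e \<in> E" "exp_le e v" "v \<in> exps n"
    unfolding up_closure_def by blast
  have "(monom v :: 'k mpoly) = monom (v - e) * monom e"
    using exp_le_add_diff[OF e(2)] by (simp add: monom_mult add.commute)
  moreover have "(monom (v - e) :: 'k mpoly) \<in> Sring n"
    using exps_diff[OF e(3)] by (simp add: Sring_eq_supported_polys)
  ultimately show "(monom v :: 'k mpoly) \<in> ideal_gen n (monom ` E)"
    using e(1) by (simp add: ideal_gen_mult ideal_gen_base)
qed

lemma ideal_mult_supported_polys:
  assumes "up_closed n U" "up_closed n V"
  shows "ideal_mult n (supported_polys U) (supported_polys V) = (supported_polys (U + V) :: 'k::field mpoly set)"
  unfolding ideal_mult_def
proof (rule ideal_gen_eq_supported_polys[OF up_closed_set_plus[OF assms]])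
  show "{f * g |f g. f \<in> (supported_polys U :: 'k mpoly set) \<and> g \<in> supported_polys V} \<subseteq> supported_polys (U + V)"
    using keys_mult_supported by blast
next
  fix x assume "x \<in> U + V"
  then obtain u v where "x = u + v" "u \<in> U" "v \<in> V"
    by (auto elim: set_plus_elim)
  then have "(monom x :: 'k mpoly) \<in> {f * g |f g. f \<in> supported_polys U \<and> g \<in> supported_polys V}"
    by (metis (mono_tags, lifting) mem_Collect_eq monom_in_supported_polys monom_mult)
  then show "(monom x :: 'k mpoly) \<in> ideal_gen n {f * g |f g. f \<in> supported_polys U \<and> g \<in> supported_polys V}"
    by (rule ideal_gen_base)
qed

lemma ideal_gen_Union_supported_polys:
  assumes "\<And>U. U \<in> \<U> \<Longrightarrow> up_closed n U"
  shows "ideal_gen n (\<Union>U\<in>\<U>. supported_polys U) = (supported_polys (\<Union>\<U>) :: 'k::field mpoly set)"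
proof (rule ideal_gen_eq_supported_polys[OF up_closed_Union[OF assms]])
  show "(\<Union>U\<in>\<U>. supported_polys U) \<subseteq> (supported_polys (\<Union>\<U>) :: 'k mpoly set)"
    unfolding supported_polys_def by blast
next
  fix v assume "v \<in> \<Union>\<U>"
  then show "(monom v :: 'k mpoly) \<in> ideal_gen n (\<Union>U\<in>\<U>. supported_polys U)"
    by (intro ideal_gen_base) auto
qed

lemma lookup_mult_monom:
  "Poly_Mapping.lookup (f * (monom e :: 'k::field mpoly)) (v + e) = Poly_Mapping.lookup f v"
proof -
  have "f * monom e = (\<Sum>w\<in>Poly_Mapping.keys f. Poly_Mapping.single (w + e) (Poly_Mapping.lookup f w))"
    by (subst poly_mapping_monomial_sum) (simp add: sum_distrib_right monom_def mult_single)
  then have "Poly_Mapping.lookup (f * monom e) (v + e) =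
      (\<Sum>w\<in>Poly_Mapping.keys f. if w = v then Poly_Mapping.lookup f w else 0)"
    by (simp add: lookup_sum lookup_single when_def)
  also have "\<dots> = Poly_Mapping.lookup f v"
    by (simp add: in_keys_iff)
  finally show ?thesis .
qed

lemma max_ideal_eq: "max_ideal n = (supported_polys (up_closure n (unit_exp ` {..<n})) :: 'k::field mpoly set)"
proof -
  have "{var i | i. i < n} = (monom :: _ \<Rightarrow> 'k mpoly) ` unit_exp ` {..<n}"
    by (auto simp: var_eq_monom)
  moreover have "unit_exp ` {..<n} \<subseteq> exps n"
    using unit_exp_exps by blast
  ultimately show ?thesis
    unfolding max_ideal_def by (simp add: ideal_gen_monoms)
qed

lemma ideal_colon_max_ideal_subset:
  "ideal_colon n (supported_polys U) (max_ideal n) \<subseteq> (supported_polys (colon_exps n U) :: 'k::field mpoly set)"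
proof
  fix f :: "'k mpoly" assume f: "f \<in> ideal_colon n (supported_polys U) (max_ideal n)"
  have "v \<in> colon_exps n U" if v: "v \<in> Poly_Mapping.keys f" for v
  proof -
    have "unit_exp i + v \<in> U" if "i < n" for i
    proof -
      have "(monom (unit_exp i) :: 'k mpoly) \<in> max_ideal n"
        using that unfolding max_ideal_def var_eq_monom[symmetric] by (intro ideal_gen_base) blast
      then have "f * monom (unit_exp i) \<in> supported_polys U"
        using f unfolding ideal_colon_def by blast
      moreover have "v + unit_exp i \<in> Poly_Mapping.keys (f * monom (unit_exp i))"
        using v by (simp add: in_keys_iff lookup_mult_monom)
      ultimately show ?thesis
        unfolding supported_polys_def by (auto simp: add.commute)
    qed
    moreover have "v \<in> exps n"
      using f v unfolding ideal_colon_def Sring_eq_supported_polys supported_polys_def by blast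
    ultimately show ?thesis
      unfolding colon_exps_def by blast
  qed
  then show "f \<in> supported_polys (colon_exps n U)"
    unfolding supported_polys_def by blast
qed

lemma ideal_colon_max_ideal:
  assumes "up_closed n U"
  shows "ideal_colon n (supported_polys U) (max_ideal n) = (supported_polys (colon_exps n U) :: 'k::field mpoly set)"
proof
  have "f * g \<in> supported_polys U"
    if "f \<in> supported_polys (colon_exps n U)" "g \<in> max_ideal n" for f g :: "'k mpoly"
    using keys_mult_supported[OF that(1)] that(2) colon_exps_plus_up_units_subset[OF assms]
    unfolding max_ideal_eq supported_polys_def by blast
  moreover have "supported_polys (colon_exps n U) \<subseteq> Sring n"
    by (auto simp: Sring_eq_supported_polys supported_polys_def colon_exps_def)
  ultimately show "(supported_polys (colon_exps n U) :: 'k mpoly set) \<subseteq> ideal_colon n (supported_polys U) (max_ideal n)"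
    unfolding ideal_colon_def by blast
qed (rule ideal_colon_max_ideal_subset)

section \<open>Integer walks with bounded values and steps\<close>

text \<open>
  \<open>lower_env L lo p\<close> is the least value at \<open>p\<close> of a walk on \<open>[0, p]\<close> respecting the lower bounds
  \<open>L\<close> and \<open>lo\<close>, and dually for \<open>upper_env\<close>.
\<close>

primrec lower_env :: "(nat \<Rightarrow> int) \<Rightarrow> (nat \<Rightarrow> int) \<Rightarrow> nat \<Rightarrow> int" where
  "lower_env L lo 0 = L 0"
| "lower_env L lo (Suc p) = max (L (Suc p)) (lower_env L lo p + lo p)"

primrec upper_env :: "(nat \<Rightarrow> int) \<Rightarrow> (nat \<Rightarrow> int) \<Rightarrow> nat \<Rightarrow> int" where
  "upper_env U hi 0 = U 0"
| "upper_env U hi (Suc p) = min (U (Suc p)) (upper_env U hi p + hi p)"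

lemma lower_env_attained: "\<exists>a\<le>p. lower_env L lo p = L a + (\<Sum>j=a..<p. lo j)"
proof (induction p)
  case (Suc p)
  then obtain a where a: "a \<le> p" "lower_env L lo p = L a + (\<Sum>j=a..<p. lo j)"
    by blast
  show ?case
  proof (cases "lower_env L lo p + lo p \<le> L (Suc p)")
    case True
    then show ?thesis
      by (intro exI[of _ "Suc p"]) auto
  next
    case False
    then show ?thesis
      using a by (intro exI[of _ a]) (auto simp: sum.atLeastLessThan_Suc)
  qed
qed simp

lemma upper_env_attained: "\<exists>a\<le>p. upper_env U hi p = U a + (\<Sum>j=a..<p. hi j)"
proof (induction p)
  case (Suc p)
  then obtain a where a: "a \<le> p" "upper_env U hi p = U a + (\<Sum>j=a..<p. hi j)"
    by blast
  show ?case
  proof (cases "U (Suc p) \<le> upper_env U hi p + hi p")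
    case True
    then show ?thesis
      by (intro exI[of _ "Suc p"]) auto
  next
    case False
    then show ?thesis
      using a by (intro exI[of _ a]) (auto simp: sum.atLeastLessThan_Suc)
  qed
qed simp

lemma lower_env_ge: "L p \<le> lower_env L lo p"
  by (cases p) auto

lemma upper_env_le: "upper_env U hi p \<le> U p"
  by (cases p) auto

definition bounded_walk ::
    "(nat \<Rightarrow> int) \<Rightarrow> (nat \<Rightarrow> int) \<Rightarrow> (nat \<Rightarrow> int) \<Rightarrow> (nat \<Rightarrow> int) \<Rightarrow> nat \<Rightarrow> (nat \<Rightarrow> int) \<Rightarrow> bool" where
  "bounded_walk L U lo hi N T \<longleftrightarrow> (\<forall>p\<le>N. L p \<le> T p \<and> T p \<le> U p) \<and>
     (\<forall>j<N. lo j \<le> T (Suc j) - T j \<and> T (Suc j) - T j \<le> hi j)"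

lemma lower_env_le_upper_env:
  fixes L U lo hi :: "nat \<Rightarrow> int"
  assumes LU: "\<And>p. p \<le> N \<Longrightarrow> L p \<le> U p"
    and lo_hi: "\<And>j. j < N \<Longrightarrow> lo j \<le> hi j"
    and L_lo: "\<And>a c. a < c \<Longrightarrow> c \<le> N \<Longrightarrow> L a + (\<Sum>j=a..<c. lo j) \<le> U c"
    and L_hi: "\<And>a c. a < c \<Longrightarrow> c \<le> N \<Longrightarrow> L c \<le> U a + (\<Sum>j=a..<c. hi j)"
    and "p \<le> N"
  shows "lower_env L lo p \<le> upper_env U hi p"
proof -
  obtain a where a: "a \<le> p" "lower_env L lo p = L a + (\<Sum>j=a..<p. lo j)"
    using lower_env_attained by blast
  obtain a' where a': "a' \<le> p" "upper_env U hi p = U a' + (\<Sum>j=a'..<p. hi j)"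
    using upper_env_attained by blast
  have lo_le_hi: "(\<Sum>j=c..<p. lo j) \<le> (\<Sum>j=c..<p. hi j)" for c
    using lo_hi \<open>p \<le> N\<close> by (intro sum_mono) auto
  show ?thesis
  proof (cases "a \<le> a'")
    case True
    have "L a + (\<Sum>j=a..<a'. lo j) \<le> U a'"
      using True L_lo[of a a'] LU[of a] a'(1) \<open>p \<le> N\<close> by (cases "a = a'") auto
    then show ?thesis
      using a a' lo_le_hi[of a'] sum.atLeastLessThan_concat[OF True a'(1), of lo] by linarith
  next
    case False
    have "L a \<le> U a' + (\<Sum>j=a'..<a. hi j)"
      using False L_hi[of a' a] a(1) \<open>p \<le> N\<close> by auto
    then show ?thesis
      using False a a' lo_le_hi[of a] sum.atLeastLessThan_concat[of a' a p hi] by linarith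
  qed
qed

lemma bounded_walk_ending_at:
  fixes L U lo hi :: "nat \<Rightarrow> int"
  assumes "\<And>j. j < p \<Longrightarrow> lo j \<le> hi j"
    and "\<And>q. q \<le> p \<Longrightarrow> lower_env L lo q \<le> upper_env U hi q"
    and "lower_env L lo p \<le> x" "x \<le> upper_env U hi p"
  shows "\<exists>T. T p = x \<and> bounded_walk L U lo hi p T"
  using assms
proof (induction p arbitrary: x)
  case 0
  then show ?case
    by (auto simp: bounded_walk_def intro!: exI[of _ "\<lambda>_. x"])
next
  case (Suc p)
  define y where "y = max (lower_env L lo p) (x - hi p)"
  have "y \<le> upper_env U hi p"
    using Suc.prems(2)[of p] Suc.prems(4) by (auto simp: y_def)
  then obtain T where T: "T p = y" "bounded_walk L U lo hi p T"
    using Suc.IH[of y] Suc.prems(1,2) by (auto simp: y_def)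
  have "lo p \<le> hi p"
    using Suc.prems(1) by simp
  then have "bounded_walk L U lo hi (Suc p) (T(Suc p := x))"
    using T Suc.prems(3,4) lower_env_ge[of L "Suc p" lo] upper_env_le[of U hi "Suc p"]
    by (auto simp: bounded_walk_def y_def less_Suc_eq le_Suc_eq)
  then show ?case
    by (metis fun_upd_same)
qed

lemma bounded_walk_exists:
  fixes L U lo hi :: "nat \<Rightarrow> int"
  assumes "\<And>p. p \<le> N \<Longrightarrow> L p \<le> U p"
    and "\<And>j. j < N \<Longrightarrow> lo j \<le> hi j"
    and "\<And>a c. a < c \<Longrightarrow> c \<le> N \<Longrightarrow> L a + (\<Sum>j=a..<c. lo j) \<le> U c"
    and "\<And>a c. a < c \<Longrightarrow> c \<le> N \<Longrightarrow> L c \<le> U a + (\<Sum>j=a..<c. hi j)"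
  obtains T where "bounded_walk L U lo hi N T"
  using bounded_walk_ending_at[of N lo hi L U "lower_env L lo N"]
    lower_env_le_upper_env[OF assms] assms(2) that
  by auto

lemma exp_vec_exists:
  fixes L U lo hi :: "nat \<Rightarrow> int"
  assumes "L 0 = 0" "U 0 = 0" "\<And>j. j < n \<Longrightarrow> 0 \<le> lo j"
    and "\<And>p. p \<le> n \<Longrightarrow> L p \<le> U p"
    and "\<And>j. j < n \<Longrightarrow> lo j \<le> hi j"
    and "\<And>a c. a < c \<Longrightarrow> c \<le> n \<Longrightarrow> L a + (\<Sum>j=a..<c. lo j) \<le> U c"
    and "\<And>a c. a < c \<Longrightarrow> c \<le> n \<Longrightarrow> L c \<le> U a + (\<Sum>j=a..<c. hi j)"
  obtains g where "g \<in> exps n"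
    and "\<And>j. j < n \<Longrightarrow> lo j \<le> int (Poly_Mapping.lookup g j) \<and> int (Poly_Mapping.lookup g j) \<le> hi j"
    and "\<And>p. p \<le> n \<Longrightarrow> L p \<le> int (psum g p) \<and> int (psum g p) \<le> U p"
proof -
  obtain T where "bounded_walk L U lo hi n T"
    using bounded_walk_exists[of n L U lo hi] assms(4-7) by blast
  then have T: "\<And>p. p \<le> n \<Longrightarrow> L p \<le> T p \<and> T p \<le> U p"
    and step: "\<And>j. j < n \<Longrightarrow> lo j \<le> T (Suc j) - T j \<and> T (Suc j) - T j \<le> hi j"
    by (auto simp: bounded_walk_def)
  define g where "g = Abs_poly_mapping (\<lambda>j. if j < n then nat (T (Suc j) - T j) else 0)"
  have "finite {j. (if j < n then nat (T (Suc j) - T j) else 0) \<noteq> 0}"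
    by (rule finite_subset[of _ "{..<n}"]) auto
  then have lookup_g: "Poly_Mapping.lookup g j = (if j < n then nat (T (Suc j) - T j) else 0)" for j
    by (simp add: g_def)
  have lookup_g_int: "int (Poly_Mapping.lookup g j) = T (Suc j) - T j" if "j < n" for j
    using step[OF that] assms(3)[OF that] by (simp add: lookup_g that)
  have "g \<in> exps n"
    by (auto simp: exps_def in_keys_iff lookup_g split: if_splits)
  moreover have "int (psum g p) = T p" if "p \<le> n" for p
    using that
  proof (induction p)
    case 0
    then show ?case
      using T[of 0] assms(1,2) by simp
  next
    case (Suc p)
    then show ?case
      using lookup_g_int[of p] by (simp add: psum_Suc)
  qed
  ultimately show ?thesis
    using that T step lookup_g_int by simp
qed

lemma mult_le_cancel_slack:
  fixes K X Y :: int
  assumes "0 \<le> K" "(K + 1) * X \<le> (K + 1) * Y + K"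
  shows "X \<le> Y"
proof (rule ccontr)
  assume "\<not> X \<le> Y"
  then have "(K + 1) * (Y + 1) \<le> (K + 1) * X"
    using assms(1) by (intro mult_left_mono) auto
  then show False
    using assms(2) by (simp add: algebra_simps)
qed

text \<open>
  If \<open>S\<close> and \<open>x\<close> satisfy the bounds scaled by \<open>K + 1\<close> up to the slacks \<open>\<epsilon>\<close>, \<open>\<delta>\<close>, \<open>\<sigma>\<close>, the
  consistency conditions of the unscaled system hold after dividing by \<open>K + 1\<close>, as long as the
  accumulated slack stays \<open>\<le> K\<close> (by \<open>mult_le_cancel_slack\<close>).
\<close>

lemma exp_vec_exists_scaled:
  fixes K \<sigma> :: int and S x L U lo hi \<epsilon> \<delta> :: "nat \<Rightarrow> int"
  assumes K: "0 \<le> K"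
    and S: "\<And>a c. a \<le> c \<Longrightarrow> c \<le> n \<Longrightarrow> S c = S a + (\<Sum>j=a..<c. x j)"
    and L: "\<And>p. p \<le> n \<Longrightarrow> (K + 1) * L p \<le> S p + \<epsilon> p"
    and U: "\<And>p. p \<le> n \<Longrightarrow> S p + \<delta> p \<le> (K + 1) * U p"
    and lo: "\<And>j. j < n \<Longrightarrow> (K + 1) * lo j \<le> x j + \<sigma>"
    and hi: "\<And>j. j < n \<Longrightarrow> x j \<le> (K + 1) * hi j"
    and slack_step: "\<sigma> \<le> K"
    and slack_up: "\<And>a c. a \<le> c \<Longrightarrow> c \<le> n \<Longrightarrow> \<epsilon> a + int (c - a) * \<sigma> \<le> \<delta> c + K"
    and slack_down: "\<And>a c. a < c \<Longrightarrow> c \<le> n \<Longrightarrow> \<epsilon> c \<le> \<delta> a + K"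
    and "L 0 = 0" "U 0 = 0" "\<And>j. j < n \<Longrightarrow> 0 \<le> lo j"
  obtains g where "g \<in> exps n"
    and "\<And>j. j < n \<Longrightarrow> lo j \<le> int (Poly_Mapping.lookup g j) \<and> int (Poly_Mapping.lookup g j) \<le> hi j"
    and "\<And>p. p \<le> n \<Longrightarrow> L p \<le> int (psum g p) \<and> int (psum g p) \<le> U p"
proof (rule exp_vec_exists)
  show "L p \<le> U p" if "p \<le> n" for p
    using mult_le_cancel_slack[OF K] L[OF that] U[OF that] slack_up[of p p] that by force
  show "lo j \<le> hi j" if "j < n" for j
    using mult_le_cancel_slack[OF K] lo[OF that] hi[OF that] slack_step by force
  show "L a + (\<Sum>j=a..<c. lo j) \<le> U c" if "a < c" "c \<le> n" for a c
  proof (rule mult_le_cancel_slack[OF K])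
    have "(K + 1) * (\<Sum>j=a..<c. lo j) \<le> (\<Sum>j=a..<c. x j + \<sigma>)"
      unfolding sum_distrib_left using lo that by (intro sum_mono) auto
    then show "(K + 1) * (L a + (\<Sum>j=a..<c. lo j)) \<le> (K + 1) * U c + K"
      using L[of a] U[of c] S[of a c] slack_up[of a c] that by (simp add: sum.distrib algebra_simps)
  qed
  show "L c \<le> U a + (\<Sum>j=a..<c. hi j)" if "a < c" "c \<le> n" for a c
  proof (rule mult_le_cancel_slack[OF K])
    have "(\<Sum>j=a..<c. x j) \<le> (K + 1) * (\<Sum>j=a..<c. hi j)"
      unfolding sum_distrib_left using hi that by (intro sum_mono) auto
    then show "(K + 1) * L c \<le> (K + 1) * (U a + (\<Sum>j=a..<c. hi j)) + K"
      using L[of c] U[of a] S[of a c] slack_down[of a c] that by (simp add: algebra_simps)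
  qed
qed (use assms that in auto)

lemma times_Suc_max_le:
  fixes K A C X :: int
  assumes "0 \<le> K" "(K + 1) * A \<le> X" "X \<le> (K + 1) * C"
  shows "(K + 1) * max A (X - K * C) \<le> X"
proof -
  have "K * (X - (K + 1) * C) \<le> 0"
    using assms(1,3) by (simp add: mult_nonneg_nonpos)
  then have "(K + 1) * (X - K * C) \<le> X"
    by (simp add: algebra_simps)
  then show ?thesis
    using assms(2) by (simp add: max_def)
qed

lemma le_times_Suc_min:
  fixes K A C X :: int
  assumes "0 \<le> K" "(K + 1) * A \<le> X" "X \<le> (K + 1) * C"
  shows "X \<le> (K + 1) * min C (X - K * A)"
proof -
  have "0 \<le> K * (X - (K + 1) * A)"
    using assms(1,2) by simp
  then have "X \<le> (K + 1) * (X - K * A)"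
    by (simp add: algebra_simps)
  then show ?thesis
    using assms(3) by (simp add: min_def)
qed

section \<open>Polymatroids of PLP type\<close>

locale plp_bounds =
  fixes n :: nat and b \<alpha> \<beta> :: "nat \<Rightarrow> nat"
begin

definition gen_exps :: "nat \<Rightarrow> (nat \<Rightarrow>\<^sub>0 nat) set" where
  "gen_exps m = {u \<in> exps n. \<forall>i<n. Poly_Mapping.lookup u i \<le> m * b i \<and>
     m * \<alpha> i \<le> psum u (Suc i) \<and> psum u (Suc i) \<le> m * \<beta> i}"

lemma gen_exps_int_iff:
  "u \<in> gen_exps m \<longleftrightarrow> u \<in> exps n \<and> (\<forall>i<n. int (Poly_Mapping.lookup u i) \<le> int m * int (b i) \<and>
     int m * int (\<alpha> i) \<le> int (psum u (Suc i)) \<and> int (psum u (Suc i)) \<le> int m * int (\<beta> i))"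
  by (simp add: gen_exps_def flip: of_nat_mult)

text \<open>
  Whether \<open>unit_exp i + u \<in> gen_exps m\<close> for all \<open>i\<close> is decided by the extreme shifts:
  \<open>i = n - 1\<close> gives the lower, \<open>i = 0\<close> the upper bounds on the partial sums.
\<close>

lemma colon_gen_exps_bounds:
  assumes "u \<in> colon_exps n (gen_exps m)" "i < n"
  shows "int (Poly_Mapping.lookup u i) + 1 \<le> int m * int (b i)"
    and "int m * int (\<alpha> i) \<le> int (psum u (Suc i)) + of_bool (Suc i = n)"
    and "int (psum u (Suc i)) + 1 \<le> int m * int (\<beta> i)"
proof -
  have shifted: "unit_exp l + u \<in> gen_exps m" if "l < n" for l
    using assms(1) that by (simp add: colon_exps_def)
  have "int (Poly_Mapping.lookup (unit_exp i + u) i) \<le> int m * int (b i)"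
    using shifted[OF assms(2)] assms(2) by (simp add: gen_exps_int_iff)
  then show "int (Poly_Mapping.lookup u i) + 1 \<le> int m * int (b i)"
    by (simp add: lookup_unit_exp_add)
  have "int m * int (\<alpha> i) \<le> int (psum (unit_exp (n - 1) + u) (Suc i))"
    using shifted[of "n - 1"] assms(2) by (simp add: gen_exps_int_iff)
  moreover have "n - 1 < Suc i \<longleftrightarrow> Suc i = n"
    using assms(2) by linarith
  ultimately show "int m * int (\<alpha> i) \<le> int (psum u (Suc i)) + of_bool (Suc i = n)"
    by (cases "Suc i = n") (simp_all add: psum_unit_exp_add)
  have "int (psum (unit_exp 0 + u) (Suc i)) \<le> int m * int (\<beta> i)"
    using shifted[of 0] assms(2) by (simp add: gen_exps_int_iff)
  then show "int (psum u (Suc i)) + 1 \<le> int m * int (\<beta> i)"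
    by (simp add: psum_unit_exp_add)
qed

lemma colon_gen_exps_intro:
  assumes "u \<in> exps n"
    and "\<And>i. i < n \<Longrightarrow> int (Poly_Mapping.lookup u i) + 1 \<le> int m * int (b i) \<and>
      int m * int (\<alpha> i) \<le> int (psum u (Suc i)) + of_bool (Suc i = n) \<and>
      int (psum u (Suc i)) + 1 \<le> int m * int (\<beta> i)"
  shows "u \<in> colon_exps n (gen_exps m)"
proof -
  have "unit_exp l + u \<in> gen_exps m" if l: "l < n" for l
    unfolding gen_exps_int_iff
  proof (intro conjI allI impI)
    show "unit_exp l + u \<in> exps n"
      using assms(1) l by (simp add: exps_add unit_exp_exps)
    fix i assume "i < n"
    note u = assms(2)[OF this]
    show "int (Poly_Mapping.lookup (unit_exp l + u) i) \<le> int m * int (b i)"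
      using u by (cases "l = i") (auto simp: lookup_unit_exp_add)
    show "int m * int (\<alpha> i) \<le> int (psum (unit_exp l + u) (Suc i))"
      using u l by (cases "Suc i = n"; cases "l < Suc i") (auto simp: psum_unit_exp_add)
    show "int (psum (unit_exp l + u) (Suc i)) \<le> int m * int (\<beta> i)"
      using u by (cases "l < Suc i") (auto simp: psum_unit_exp_add)
  qed
  then show ?thesis
    using assms(1) by (simp add: colon_exps_def)
qed

lemma psum_gen_exps_bounds:
  assumes "u \<in> gen_exps m" "0 < p" "p \<le> n"
  shows "m * \<alpha> (p - 1) \<le> psum u p \<and> psum u p \<le> m * \<beta> (p - 1)"
proof -
  have "p - 1 < n" "Suc (p - 1) = p"
    using assms(2,3) by auto
  then show ?thesis
    using assms(1) unfolding gen_exps_def by (metis (no_types, lifting) mem_Collect_eq)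
qed

lemma zero_in_gen_exps: "0 \<in> gen_exps 0"
  by (simp add: gen_exps_def exps_def psum_def)

lemma gen_exps_add: "u \<in> gen_exps a \<Longrightarrow> v \<in> gen_exps c \<Longrightarrow> u + v \<in> gen_exps (a + c)"
  unfolding gen_exps_def by (auto simp: lookup_add psum_add add_mono distrib_right intro: exps_add)

lemma gen_exps_Suc_split:
  assumes "u \<in> gen_exps (Suc k)"
  obtains w g where "w \<in> gen_exps k" "g \<in> gen_exps 1" "u = w + g"
proof -
  define K where "K = int k"
  define S where "S p = int (psum u p)" for p
  define x where "x j = int (Poly_Mapping.lookup u j)" for j
  define L where "L p = (if p = 0 then 0 else max (int (\<alpha> (p - 1))) (S p - K * int (\<beta> (p - 1))))" for p
  define U where "U p = (if p = 0 then 0 else min (int (\<beta> (p - 1))) (S p - K * int (\<alpha> (p - 1))))" for p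
  define lo where "lo j = max 0 (x j - K * int (b j))" for j
  define hi where "hi j = min (int (b j)) (x j)" for j
  have K: "0 \<le> K" "int (Suc k) = K + 1"
    by (simp_all add: K_def)
  have u: "u \<in> exps n"
    and u_bounds: "\<And>i. i < n \<Longrightarrow> x i \<le> (K + 1) * int (b i) \<and>
      (K + 1) * int (\<alpha> i) \<le> S (Suc i) \<and> S (Suc i) \<le> (K + 1) * int (\<beta> i)"
    using assms unfolding gen_exps_int_iff K(2) S_def x_def by auto
  obtain g where g: "g \<in> exps n"
    and g_step: "\<And>j. j < n \<Longrightarrow> lo j \<le> int (Poly_Mapping.lookup g j) \<and> int (Poly_Mapping.lookup g j) \<le> hi j"
    and g_sum: "\<And>p. p \<le> n \<Longrightarrow> L p \<le> int (psum g p) \<and> int (psum g p) \<le> U p"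
  proof (rule exp_vec_exists_scaled[where K = K and S = S and x = x and \<epsilon> = "\<lambda>_. 0" and \<delta> = "\<lambda>_. 0" and \<sigma> = 0])
    show "S c = S a + (\<Sum>j=a..<c. x j)" if "a \<le> c" for a c
      using int_psum_split[OF that] by (simp add: S_def x_def)
    show "(K + 1) * L p \<le> S p + 0" if "p \<le> n" for p
      using times_Suc_max_le[OF K(1)] u_bounds[of "p - 1"] that by (cases p) (auto simp: L_def S_def)
    show "S p + 0 \<le> (K + 1) * U p" if "p \<le> n" for p
      using le_times_Suc_min[OF K(1)] u_bounds[of "p - 1"] that by (cases p) (auto simp: U_def S_def)
    show "(K + 1) * lo j \<le> x j + 0" if "j < n" for j
      using times_Suc_max_le[OF K(1), of 0 "x j" "int (b j)"] u_bounds[OF that] by (simp add: lo_def x_def)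
    show "x j \<le> (K + 1) * hi j" if "j < n" for j
      using le_times_Suc_min[OF K(1), of 0 "x j" "int (b j)"] u_bounds[OF that] by (simp add: hi_def x_def)
  qed (auto simp: K L_def U_def lo_def)
  have "exp_le g u"
    using exp_le_if_lookup_le[OF g] g_step by (force simp: hi_def x_def)
  note w = int_lookup_diff[OF this, folded x_def] and w_sum = int_psum_diff[OF this, folded S_def]
  have "g \<in> gen_exps 1"
    unfolding gen_exps_int_iff
    using g g_step g_sum[of "Suc _"] by (auto simp: L_def U_def hi_def)
  moreover have "u - g \<in> gen_exps k"
    unfolding gen_exps_int_iff
  proof (intro conjI allI impI exps_diff[OF u])
    fix i assume i: "i < n"
    show "int (Poly_Mapping.lookup (u - g) i) \<le> int k * int (b i)"
      using w g_step[OF i] by (simp add: lo_def K_def)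
    show "int k * int (\<alpha> i) \<le> int (psum (u - g) (Suc i))"
      and "int (psum (u - g) (Suc i)) \<le> int k * int (\<beta> i)"
      using w_sum g_sum[of "Suc i"] i by (simp_all add: L_def U_def K_def)
  qed
  moreover have "u = (u - g) + g"
    using exp_le_add_diff[OF \<open>exp_le g u\<close>] by (simp add: add.commute)
  ultimately show ?thesis
    using that by blast
qed

lemma colon_gen_exps_Suc_split:
  assumes "u \<in> colon_exps n (gen_exps (Suc k))" "1 \<le> k" "n \<le> Suc k"
  obtains w g where "w \<in> colon_exps n (gen_exps k)" "g \<in> gen_exps 1" "u = w + g"
proof -
  define K where "K = int k"
  define S where "S p = int (psum u p)" for p
  define x where "x j = int (Poly_Mapping.lookup u j)" for j
  define L where "L p = (if p = 0 then 0 else max (int (\<alpha> (p - 1))) (S p + 1 - K * int (\<beta> (p - 1))))" for p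
  define U where "U p = (if p = 0 then 0 else min (int (\<beta> (p - 1))) (S p + of_bool (p = n) - K * int (\<alpha> (p - 1))))" for p
  define lo where "lo j = max 0 (x j + 1 - K * int (b j))" for j
  define hi where "hi j = min (int (b j)) (x j)" for j
  have K: "0 \<le> K" "1 \<le> K" "int n \<le> K + 1" "int (Suc k) = K + 1"
    using assms(2,3) by (simp_all add: K_def)
  have u: "u \<in> exps n"
    using assms(1) colon_exps_subset_exps by blast
  have u_bounds: "\<And>i. i < n \<Longrightarrow> x i + 1 \<le> (K + 1) * int (b i) \<and>
      (K + 1) * int (\<alpha> i) \<le> S (Suc i) + of_bool (Suc i = n) \<and> S (Suc i) + 1 \<le> (K + 1) * int (\<beta> i)"
    using colon_gen_exps_bounds[OF assms(1)] unfolding K(4) S_def x_def by auto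
  obtain g where g: "g \<in> exps n"
    and g_step: "\<And>j. j < n \<Longrightarrow> lo j \<le> int (Poly_Mapping.lookup g j) \<and> int (Poly_Mapping.lookup g j) \<le> hi j"
    and g_sum: "\<And>p. p \<le> n \<Longrightarrow> L p \<le> int (psum g p) \<and> int (psum g p) \<le> U p"
  proof (rule exp_vec_exists_scaled[where K = K and S = S and x = x and \<sigma> = 1
        and \<epsilon> = "\<lambda>p. of_bool (0 < p)" and \<delta> = "\<lambda>p. of_bool (0 < p \<and> p = n)"])
    show "S c = S a + (\<Sum>j=a..<c. x j)" if "a \<le> c" for a c
      using int_psum_split[OF that] by (simp add: S_def x_def)
    show "(K + 1) * L p \<le> S p + of_bool (0 < p)" if "p \<le> n" for p
    proof (cases p)
      case (Suc i)
      then have "(K + 1) * int (\<alpha> i) \<le> S p + 1" "S p + 1 \<le> (K + 1) * int (\<beta> i)"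
        using u_bounds[of i] that by (cases "Suc i = n"; simp)+
      then show ?thesis
        using times_Suc_max_le[OF K(1)] Suc by (simp add: L_def)
    qed (simp add: L_def S_def)
    show "S p + of_bool (0 < p \<and> p = n) \<le> (K + 1) * U p" if "p \<le> n" for p
      using le_times_Suc_min[OF K(1), of _ "S p + of_bool (p = n)"] u_bounds[of "p - 1"] that
      by (cases p) (auto simp: U_def S_def)
    show "(K + 1) * lo j \<le> x j + 1" if "j < n" for j
      using times_Suc_max_le[OF K(1), of 0 "x j + 1" "int (b j)"] u_bounds[OF that] by (simp add: lo_def x_def)
    show "x j \<le> (K + 1) * hi j" if "j < n" for j
      using le_times_Suc_min[OF K(1), of 0 "x j" "int (b j)"] u_bounds[OF that] by (simp add: hi_def x_def)
    show "of_bool (0 < a) + int (c - a) * 1 \<le> of_bool (0 < c \<and> c = n) + K" if "a \<le> c" "c \<le> n" for a c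
      \<comment> \<open>the only use of \<open>n \<le> Suc k\<close>\<close>
      using that K(1,3) by (cases "c = n"; cases "a = 0") auto
  qed (use K in \<open>auto simp: L_def U_def lo_def\<close>)
  have "exp_le g u"
    using exp_le_if_lookup_le[OF g] g_step by (force simp: hi_def x_def)
  note w = int_lookup_diff[OF this, folded x_def] and w_sum = int_psum_diff[OF this, folded S_def]
  have "g \<in> gen_exps 1"
    unfolding gen_exps_int_iff
    using g g_step g_sum[of "Suc _"] by (auto simp: L_def U_def hi_def)
  moreover have "u - g \<in> colon_exps n (gen_exps k)"
  proof (rule colon_gen_exps_intro[OF exps_diff[OF u]])
    fix i assume i: "i < n"
    show "int (Poly_Mapping.lookup (u - g) i) + 1 \<le> int k * int (b i) \<and>
      int k * int (\<alpha> i) \<le> int (psum (u - g) (Suc i)) + of_bool (Suc i = n) \<and>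
      int (psum (u - g) (Suc i)) + 1 \<le> int k * int (\<beta> i)"
      using w g_step[OF i] w_sum g_sum[of "Suc i"] i by (simp add: lo_def L_def U_def K_def)
  qed
  moreover have "u = (u - g) + g"
    using exp_le_add_diff[OF \<open>exp_le g u\<close>] by (simp add: add.commute)
  ultimately show ?thesis
    using that by blast
qed


lemma gen_exps_Suc: "gen_exps (Suc m) = gen_exps m + gen_exps 1"
proof
  show "gen_exps (Suc m) \<subseteq> gen_exps m + gen_exps 1"
  proof
    fix u assume "u \<in> gen_exps (Suc m)"
    then obtain w g where "w \<in> gen_exps m" "g \<in> gen_exps 1" "u = w + g"
      by (rule gen_exps_Suc_split)
    then show "u \<in> gen_exps m + gen_exps 1"
      by (simp add: set_plus_intro)
  qed
  show "gen_exps m + gen_exps 1 \<subseteq> gen_exps (Suc m)"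
    using gen_exps_add[of _ m _ 1] by (auto elim!: set_plus_elim)
qed

lemma gen_exps_subset_exps: "gen_exps m \<subseteq> exps n"
  by (auto simp: gen_exps_def)

lemma gen_exps_plus_colon_subset:
  "gen_exps a + colon_exps n (gen_exps c) \<subseteq> colon_exps n (gen_exps (a + c))"
proof -
  have "gen_exps a + gen_exps c \<subseteq> gen_exps (a + c)"
    using gen_exps_add by (auto elim!: set_plus_elim)
  then show ?thesis
    using set_plus_colon_exps_subset[OF gen_exps_subset_exps] colon_exps_mono by blast
qed

end

locale plp = plp_bounds n b \<alpha> \<beta> for n :: nat and b \<alpha> \<beta> :: "nat \<Rightarrow> nat" +
  fixes d :: nat
  assumes n_pos: "1 \<le> n"
    and \<alpha>_mono: "\<And>i. i + 1 < n \<Longrightarrow> \<alpha> i \<le> \<alpha> (i + 1)"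
    and \<alpha>_le_\<beta>: "\<And>i. i < n \<Longrightarrow> \<alpha> i \<le> \<beta> i"
    and \<alpha>_last: "\<alpha> (n - 1) = d" and \<beta>_last: "\<beta> (n - 1) = d"
    and \<alpha>_0: "\<alpha> 0 = 0"
begin

definition pow_exps :: "nat \<Rightarrow> (nat \<Rightarrow>\<^sub>0 nat) set" where
  "pow_exps m = up_closure n (gen_exps m)"

lemma \<alpha>_mono_le: "i \<le> j \<Longrightarrow> j < n \<Longrightarrow> \<alpha> i \<le> \<alpha> j"
proof (induction j)
  case (Suc j)
  then show ?case
    using \<alpha>_mono[of j] by (cases "i = Suc j") auto
qed simp

lemma psum_gen_exps:
  assumes "u \<in> gen_exps m"
  shows "psum u n = m * d"
  using psum_gen_exps_bounds[OF assms _ order_refl] n_pos \<alpha>_last \<beta>_last by simp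

lemma up_closed_pow_exps: "up_closed n (pow_exps m)"
  by (simp add: pow_exps_def up_closed_up_closure)

lemma gen_exps_subset_pow_exps: "gen_exps m \<subseteq> pow_exps m"
  by (simp add: pow_exps_def subset_up_closure gen_exps_subset_exps)

lemma pow_exps_0: "pow_exps 0 = exps n"
proof
  show "exps n \<subseteq> pow_exps 0"
    using zero_in_gen_exps exp_le_zero unfolding pow_exps_def up_closure_def by blast
qed (simp add: pow_exps_def up_closure_def)

lemma pow_exps_Suc: "pow_exps (Suc m) = pow_exps m + pow_exps 1"
  unfolding pow_exps_def gen_exps_Suc
  by (rule up_closure_set_plus[OF gen_exps_subset_exps gen_exps_subset_exps, symmetric])

lemma pow_exps_add: "pow_exps a + pow_exps c \<subseteq> pow_exps (a + c)"
proof -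
  have "gen_exps a + gen_exps c \<subseteq> gen_exps (a + c)"
    using gen_exps_add by (auto elim!: set_plus_elim)
  then show ?thesis
    unfolding pow_exps_def up_closure_set_plus[OF gen_exps_subset_exps gen_exps_subset_exps]
    by (rule up_closure_mono)
qed

lemma psum_pow_exps:
  assumes "v \<in> pow_exps m"
  shows "m * d \<le> psum v n"
proof -
  obtain g where "g \<in> gen_exps m" "exp_le g v"
    using assms unfolding pow_exps_def up_closure_def by blast
  then show ?thesis
    using psum_exp_le[of g v n] psum_gen_exps[of g m] by simp
qed

lemma gen_exps_if_psum_eq:
  assumes "v \<in> pow_exps m" "psum v n = m * d"
  shows "v \<in> gen_exps m"
proof -
  obtain g where g: "g \<in> gen_exps m" "exp_le g v" "v \<in> exps n"
    using assms(1) unfolding pow_exps_def up_closure_def by blast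
  then have "g = v"
    using exp_le_eq_if_psum_eq[OF g(2,3)] psum_gen_exps[OF g(1)] assms(2) by simp
  then show ?thesis
    using g(1) by simp
qed

text \<open>
  \<open>x\<^sub>i x\<^sup>v \<in> I\<^sup>m\<close> gives a generator below \<open>v\<close> off coordinate \<open>i\<close>. Taking \<open>i\<close> outside \<open>[a, c)\<close>, or at a
  coordinate where \<open>v\<close> already reaches the bound \<open>m b\<^sub>i\<close> of generators, it lies below \<open>v\<close> on \<open>[a, c)\<close>.
\<close>

lemma gen_exps_below_on_interval:
  assumes v: "v \<in> colon_exps n (pow_exps m)" and "a < c" "c \<le> n"
    and "a \<noteq> 0 \<or> c \<noteq> n \<or> (\<exists>j<n. m * b j \<le> Poly_Mapping.lookup v j)"
  obtains g where "g \<in> gen_exps m" "\<And>j. a \<le> j \<Longrightarrow> j < c \<Longrightarrow> Poly_Mapping.lookup g j \<le> Poly_Mapping.lookup v j"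
proof -
  have below: "\<exists>g\<in>gen_exps m. exp_le g (unit_exp i + v)" if "i < n" for i
    using v that unfolding colon_exps_def pow_exps_def up_closure_def by blast
  have below_off: "Poly_Mapping.lookup g j \<le> Poly_Mapping.lookup v j"
    if "exp_le g (unit_exp i + v)" "j \<noteq> i" for g i j
    using that by (auto simp: exp_le_def lookup_unit_exp_add dest: spec[of _ j])
  show ?thesis
  proof (cases "\<exists>j<n. m * b j \<le> Poly_Mapping.lookup v j")
    case True
    then obtain i where i: "i < n" "m * b i \<le> Poly_Mapping.lookup v i"
      by blast
    obtain g where g: "g \<in> gen_exps m" "exp_le g (unit_exp i + v)"
      using below[OF i(1)] by blast
    have "Poly_Mapping.lookup g i \<le> m * b i"
      using g(1) i(1) by (simp add: gen_exps_def)
    then have "Poly_Mapping.lookup g j \<le> Poly_Mapping.lookup v j" for j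
      using i(2) below_off[OF g(2)] by (cases "j = i") auto
    then show ?thesis
      using that g(1) by blast
  next
    case False
    define i where "i = (if a = 0 then n - 1 else 0)"
    have i: "i < n" "\<And>j. a \<le> j \<Longrightarrow> j < c \<Longrightarrow> j \<noteq> i"
      using assms(2-4) False by (auto simp: i_def)
    obtain g where "g \<in> gen_exps m" "exp_le g (unit_exp i + v)"
      using below[OF i(1)] by blast
    then show ?thesis
      using that below_off i(2) by blast
  qed
qed

lemma psum_colon_pow_exps_bound:
  assumes v: "v \<in> colon_exps n (pow_exps m)" "m * d \<le> psum v n" and "a < c" "c \<le> n"
  shows "m * \<alpha> (c - 1) \<le> (if a = 0 then 0 else m * \<beta> (a - 1)) +
    (\<Sum>j=a..<c. min (Poly_Mapping.lookup v j) (m * b j))"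
proof (cases "a = 0 \<and> c = n \<and> (\<forall>j<n. Poly_Mapping.lookup v j < m * b j)")
  case True
  then have "(\<Sum>j=a..<c. min (Poly_Mapping.lookup v j) (m * b j)) = psum v n"
    unfolding psum_def by (intro sum.cong) auto
  then show ?thesis
    using True v(2) \<alpha>_last by simp
next
  case False
  then obtain g where g: "g \<in> gen_exps m"
    and g_le: "\<And>j. a \<le> j \<Longrightarrow> j < c \<Longrightarrow> Poly_Mapping.lookup g j \<le> Poly_Mapping.lookup v j"
    using gen_exps_below_on_interval[OF v(1) assms(3,4)] by (metis not_less)
  have "m * \<alpha> (c - 1) \<le> psum g c"
    using psum_gen_exps_bounds[OF g] assms(3,4) by simp
  also have "\<dots> = psum g a + (\<Sum>j=a..<c. Poly_Mapping.lookup g j)"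
    using assms(3) by (simp add: psum_split)
  also have "psum g a \<le> (if a = 0 then 0 else m * \<beta> (a - 1))"
    using psum_gen_exps_bounds[OF g] assms(3,4) by simp
  also have "(\<Sum>j=a..<c. Poly_Mapping.lookup g j) \<le> (\<Sum>j=a..<c. min (Poly_Mapping.lookup v j) (m * b j))"
    using g g_le assms(4) by (intro sum_mono) (auto simp: gen_exps_def)
  finally show ?thesis
    by simp
qed

lemma pow_exps_if_colon_psum_ge:
  assumes v: "v \<in> colon_exps n (pow_exps m)" "m * d \<le> psum v n"
  shows "v \<in> pow_exps m"
proof -
  define L where "L p = (if p = 0 then 0 else int (m * \<alpha> (p - 1)))" for p
  define U where "U p = (if p = 0 then 0 else int (m * \<beta> (p - 1)))" for p
  define hi where "hi j = int (min (Poly_Mapping.lookup v j) (m * b j))" for j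
  obtain g where g: "g \<in> exps n"
    and g_step: "\<And>j. j < n \<Longrightarrow> 0 \<le> int (Poly_Mapping.lookup g j) \<and> int (Poly_Mapping.lookup g j) \<le> hi j"
    and g_sum: "\<And>p. p \<le> n \<Longrightarrow> L p \<le> int (psum g p) \<and> int (psum g p) \<le> U p"
  proof (rule exp_vec_exists[where L = L and U = U and lo = "\<lambda>_. 0" and hi = hi])
    show "L p \<le> U p" if "p \<le> n" for p
      using mult_le_mono2[OF \<alpha>_le_\<beta>[of "p - 1"], of m] that by (simp add: L_def U_def flip: of_nat_mult)
    show "L a + (\<Sum>j=a..<c. 0) \<le> U c" if "a < c" "c \<le> n" for a c
    proof -
      have "\<alpha> (a - 1) \<le> \<beta> (c - 1)"
        using \<alpha>_mono_le[of "a - 1" "c - 1"] \<alpha>_le_\<beta>[of "c - 1"] that by fastforce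
      then show ?thesis
        using mult_le_mono2[of "\<alpha> (a - 1)" "\<beta> (c - 1)" m] that
        by (simp add: L_def U_def flip: of_nat_mult)
    qed
    show "L c \<le> U a + (\<Sum>j=a..<c. hi j)" if "a < c" "c \<le> n" for a c
      using psum_colon_pow_exps_bound[OF v that] that
      by (cases "a = 0") (simp_all add: L_def U_def hi_def flip: of_nat_sum of_nat_mult of_nat_add)
  qed (auto simp: L_def U_def hi_def)
  have "g \<in> gen_exps m"
    unfolding gen_exps_int_iff
  proof (intro conjI allI impI g)
    fix i assume i: "i < n"
    show "int (Poly_Mapping.lookup g i) \<le> int m * int (b i)"
      using g_step[OF i] by (simp add: hi_def flip: of_nat_mult)
    show "int m * int (\<alpha> i) \<le> int (psum g (Suc i))" "int (psum g (Suc i)) \<le> int m * int (\<beta> i)"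
      using g_sum[of "Suc i"] i by (simp_all add: L_def U_def)
  qed
  moreover have "exp_le g v"
    using exp_le_if_lookup_le[OF g] g_step by (force simp: hi_def)
  moreover have "v \<in> exps n"
    using v(1) by (simp add: colon_exps_def)
  ultimately show ?thesis
    unfolding pow_exps_def up_closure_def by blast
qed

lemma colon_gen_exps_empty_if_one_var:
  assumes "n = 1"
  shows "colon_exps n (gen_exps m) = {}"
proof -
  have "\<beta> 0 = 0"
    using assms \<alpha>_last \<beta>_last \<alpha>_0 by simp
  then show ?thesis
    using colon_gen_exps_bounds(3)[of _ m 0] assms by fastforce
qed

lemma colon_gen_exps_decomp:
  assumes "u \<in> colon_exps n (gen_exps m)" "1 \<le> m"
  shows "\<exists>k. 1 \<le> k \<and> k \<le> m \<and> k < n \<and> u \<in> gen_exps (m - k) + colon_exps n (gen_exps k)"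
  using assms
proof (induction m arbitrary: u rule: less_induct)
  case (less m)
  show ?case
  proof (cases "m < n")
    case True
    have "u \<in> gen_exps (m - m) + colon_exps n (gen_exps m)"
      using set_plus_intro[OF zero_in_gen_exps less.prems(1)] by simp
    then show ?thesis
      using True less.prems(2) by blast
  next
    case False
    then obtain k where m: "m = Suc k" "n \<le> Suc k"
      using less.prems(2) by (cases m) auto
    have "n \<noteq> 1"
      using colon_gen_exps_empty_if_one_var less.prems(1) by blast
    then have "1 \<le> k"
      using n_pos m(2) by simp
    then obtain w g where w: "w \<in> colon_exps n (gen_exps k)" "g \<in> gen_exps 1" "u = w + g"
      using colon_gen_exps_Suc_split less.prems(1) m by metis
    then obtain k' where k': "1 \<le> k'" "k' \<le> k" "k' < n" "w \<in> gen_exps (k - k') + colon_exps n (gen_exps k')"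
      using less.IH[of k w] \<open>1 \<le> k\<close> m(1) by auto
    then obtain g' s where "w = g' + s" "g' \<in> gen_exps (k - k')" "s \<in> colon_exps n (gen_exps k')"
      by (auto elim: set_plus_elim)
    then have "u = (g' + g) + s" "g' + g \<in> gen_exps (m - k')" "s \<in> colon_exps n (gen_exps k')"
      using w gen_exps_add[of g' "k - k'" g 1] k'(2) m(1) by (simp_all add: ac_simps Suc_diff_le)
    then show ?thesis
      using k' m(1) by (intro exI[of _ k']) auto
  qed
qed

lemma up_closure_colon_gen_exps:
  assumes "1 \<le> m"
  shows "up_closure n (colon_exps n (gen_exps m)) =
    (\<Union>k\<in>{k. 1 \<le> k \<and> k \<le> m \<and> k < n}. pow_exps (m - k) + up_closure n (colon_exps n (gen_exps k)))"
proof -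
  have "colon_exps n (gen_exps m) =
      (\<Union>k\<in>{k. 1 \<le> k \<and> k \<le> m \<and> k < n}. gen_exps (m - k) + colon_exps n (gen_exps k))"
  proof
    show "colon_exps n (gen_exps m) \<subseteq>
        (\<Union>k\<in>{k. 1 \<le> k \<and> k \<le> m \<and> k < n}. gen_exps (m - k) + colon_exps n (gen_exps k))"
      using colon_gen_exps_decomp[OF _ assms] by blast
    show "(\<Union>k\<in>{k. 1 \<le> k \<and> k \<le> m \<and> k < n}. gen_exps (m - k) + colon_exps n (gen_exps k))
        \<subseteq> colon_exps n (gen_exps m)"
      using gen_exps_plus_colon_subset[of "m - _"] by fastforce
  qed
  then show ?thesis
    by (simp add: up_closure_UN pow_exps_def up_closure_set_plus gen_exps_subset_exps colon_exps_subset_exps)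
qed

lemma colon_gen_exps_eq:
  "colon_exps n (gen_exps m) = {u \<in> exps n. psum u n + 1 = m * d \<and> (\<forall>i<n. unit_exp i + u \<in> pow_exps m)}"
proof (intro equalityI subsetI CollectI conjI)
  fix u assume u: "u \<in> colon_exps n (gen_exps m)"
  then show "u \<in> exps n" "\<forall>i<n. unit_exp i + u \<in> pow_exps m"
    using gen_exps_subset_pow_exps by (auto simp: colon_exps_def)
  have "unit_exp 0 + u \<in> gen_exps m"
    using u n_pos by (simp add: colon_exps_def)
  then have "psum (unit_exp 0 + u) n = m * d"
    by (rule psum_gen_exps)
  then show "psum u n + 1 = m * d"
    using n_pos by (simp add: psum_unit_exp_add)
next
  fix u assume u: "u \<in> {u \<in> exps n. psum u n + 1 = m * d \<and> (\<forall>i<n. unit_exp i + u \<in> pow_exps m)}"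
  have "unit_exp i + u \<in> gen_exps m" if "i < n" for i
    using u that by (intro gen_exps_if_psum_eq) (simp_all add: psum_unit_exp_add)
  then show "u \<in> colon_exps n (gen_exps m)"
    using u by (simp add: colon_exps_def)
qed

lemma colon_gen_exps_if_psum_less:
  assumes "v \<in> colon_exps n (pow_exps m)" "psum v n < m * d"
  shows "v \<in> colon_exps n (gen_exps m)"
proof -
  have "m * d \<le> psum v n + 1"
    using psum_pow_exps[of "unit_exp 0 + v" m] assms(1) n_pos by (simp add: colon_exps_def psum_unit_exp_add)
  then show ?thesis
    using assms unfolding colon_gen_exps_eq by (simp add: colon_exps_def)
qed

lemma pow_exps_plus_colon_subset:
  assumes "k \<le> m"
  shows "pow_exps (m - k) + colon_exps n (pow_exps k) \<subseteq> colon_exps n (pow_exps m)"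
proof -
  have "pow_exps (m - k) + colon_exps n (pow_exps k) \<subseteq> colon_exps n (pow_exps (m - k) + pow_exps k)"
    using up_closed_pow_exps by (intro set_plus_colon_exps_subset) (simp add: up_closed_def)
  also have "\<dots> \<subseteq> colon_exps n (pow_exps m)"
    using pow_exps_add[of "m - k" k] assms by (intro colon_exps_mono) simp
  finally show ?thesis .
qed

lemma colon_pow_exps:
  assumes "1 \<le> m"
  shows "colon_exps n (pow_exps m) =
    pow_exps m \<union> (\<Union>k\<in>{k. 1 \<le> k \<and> k \<le> m \<and> k < n}. pow_exps (m - k) + colon_exps n (pow_exps k))"
proof
  show "colon_exps n (pow_exps m) \<subseteq>
      pow_exps m \<union> (\<Union>k\<in>{k. 1 \<le> k \<and> k \<le> m \<and> k < n}. pow_exps (m - k) + colon_exps n (pow_exps k))"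
  proof
    fix v assume v: "v \<in> colon_exps n (pow_exps m)"
    show "v \<in> pow_exps m \<union> (\<Union>k\<in>{k. 1 \<le> k \<and> k \<le> m \<and> k < n}. pow_exps (m - k) + colon_exps n (pow_exps k))"
    proof (cases "m * d \<le> psum v n")
      case True
      then show ?thesis
        using pow_exps_if_colon_psum_ge[OF v] by blast
    next
      case False
      then obtain k where "1 \<le> k" "k \<le> m" "k < n" "v \<in> gen_exps (m - k) + colon_exps n (gen_exps k)"
        using colon_gen_exps_decomp[OF colon_gen_exps_if_psum_less[OF v] assms] by auto
      moreover have "gen_exps (m - k) + colon_exps n (gen_exps k) \<subseteq> pow_exps (m - k) + colon_exps n (pow_exps k)"
        by (intro set_plus_mono2 colon_exps_mono gen_exps_subset_pow_exps)
      ultimately show ?thesis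
        by blast
    qed
  qed
  show "pow_exps m \<union> (\<Union>k\<in>{k. 1 \<le> k \<and> k \<le> m \<and> k < n}. pow_exps (m - k) + colon_exps n (pow_exps k))
      \<subseteq> colon_exps n (pow_exps m)"
    using subset_colon_exps[OF up_closed_pow_exps] pow_exps_plus_colon_subset by blast
qed

lemma plp_ideal_eq: "plp_ideal n b \<alpha> \<beta> = (supported_polys (pow_exps 1) :: 'k::field mpoly set)"
proof -
  have "(\<Sum>j\<le>i. Poly_Mapping.lookup u j) = psum u (Suc i)" for u i
    by (simp add: psum_def lessThan_Suc_atMost)
  then have "{u. Poly_Mapping.keys u \<subseteq> {..<n} \<and> (\<forall>i<n. Poly_Mapping.lookup u i \<le> b i \<and>
      \<alpha> i \<le> (\<Sum>j\<le>i. Poly_Mapping.lookup u j) \<and> (\<Sum>j\<le>i. Poly_Mapping.lookup u j) \<le> \<beta> i)} = gen_exps 1"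
    by (simp add: gen_exps_def exps_def)
  then have gens: "{monom u | u. Poly_Mapping.keys u \<subseteq> {..<n} \<and> (\<forall>i<n. Poly_Mapping.lookup u i \<le> b i \<and>
      \<alpha> i \<le> (\<Sum>j\<le>i. Poly_Mapping.lookup u j) \<and> (\<Sum>j\<le>i. Poly_Mapping.lookup u j) \<le> \<beta> i)} =
      (monom :: _ \<Rightarrow> 'k mpoly) ` gen_exps 1"
    by blast
  show ?thesis
    unfolding plp_ideal_def pow_exps_def gens by (rule ideal_gen_monoms[OF gen_exps_subset_exps])
qed

lemma ideal_pow_plp_ideal:
  "ideal_pow n (plp_ideal n b \<alpha> \<beta>) m = (supported_polys (pow_exps m) :: 'k::field mpoly set)"
proof (induction m)
  case 0
  then show ?case
    by (simp add: Sring_eq_supported_polys pow_exps_0)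
next
  case (Suc m)
  have "ideal_pow n (plp_ideal n b \<alpha> \<beta>) (Suc m) =
      ideal_mult n (supported_polys (pow_exps m)) (supported_polys (pow_exps 1) :: 'k mpoly set)"
    using Suc by (simp add: plp_ideal_eq)
  also have "\<dots> = supported_polys (pow_exps (Suc m))"
    unfolding pow_exps_Suc by (rule ideal_mult_supported_polys[OF up_closed_pow_exps up_closed_pow_exps])
  finally show ?case .
qed

lemma soc_plp_ideal:
  "soc n d (plp_ideal n b \<alpha> \<beta>) m = (supported_polys (up_closure n (colon_exps n (gen_exps m))) :: 'k::field mpoly set)"
proof -
  have exps_eq: "{u. Poly_Mapping.keys u \<subseteq> {..<n} \<and> mdeg u + 1 = m * d \<and>
      (\<forall>i<n. var i * (monom u :: 'k mpoly) \<in> ideal_pow n (plp_ideal n b \<alpha> \<beta>) m)} = colon_exps n (gen_exps m)"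
    unfolding colon_gen_exps_eq
  proof (rule Collect_cong)
    fix u
    show "(Poly_Mapping.keys u \<subseteq> {..<n} \<and> mdeg u + 1 = m * d \<and>
        (\<forall>i<n. var i * (monom u :: 'k mpoly) \<in> ideal_pow n (plp_ideal n b \<alpha> \<beta>) m)) \<longleftrightarrow>
        (u \<in> exps n \<and> psum u n + 1 = m * d \<and> (\<forall>i<n. unit_exp i + u \<in> pow_exps m))"
      using mdeg_eq_psum[of u n] by (auto simp: exps_def var_eq_monom monom_mult ideal_pow_plp_ideal)
  qed
  have gens: "{monom u | u. Poly_Mapping.keys u \<subseteq> {..<n} \<and> mdeg u + 1 = m * d \<and>
      (\<forall>i<n. var i * (monom u :: 'k mpoly) \<in> ideal_pow n (plp_ideal n b \<alpha> \<beta>) m)} =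
      (monom :: _ \<Rightarrow> 'k mpoly) ` colon_exps n (gen_exps m)"
    unfolding exps_eq[symmetric] by (rule image_Collect[symmetric])
  show ?thesis
    unfolding soc_def gens by (rule ideal_gen_monoms[OF colon_exps_subset_exps])
qed

lemma ideal_colon_plp_ideal:
  "ideal_colon n (ideal_pow n (plp_ideal n b \<alpha> \<beta>) m) (max_ideal n) =
    (supported_polys (colon_exps n (pow_exps m)) :: 'k::field mpoly set)"
  by (simp add: ideal_pow_plp_ideal ideal_colon_max_ideal up_closed_pow_exps)

lemma Soc_star_gen_below_plp_ideal: "Soc_star_gen_below n d (plp_ideal n b \<alpha> \<beta> :: 'k::field mpoly set) n"
  unfolding Soc_star_gen_below_def
proof (intro allI impI)
  fix m :: nat assume "1 \<le> m"
  let ?V = "\<lambda>k. pow_exps (m - k) + up_closure n (colon_exps n (gen_exps k))"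
  let ?I = "plp_ideal n b \<alpha> \<beta> :: 'k mpoly set"
  have "ideal_gen n (\<Union>k\<in>{k. 1 \<le> k \<and> k \<le> m \<and> k < n}.
      ideal_mult n (ideal_pow n ?I (m - k)) (soc n d ?I k)) =
      ideal_gen n (\<Union>k\<in>{k. 1 \<le> k \<and> k \<le> m \<and> k < n}. (supported_polys (?V k) :: 'k mpoly set))"
    by (simp add: ideal_pow_plp_ideal soc_plp_ideal ideal_mult_supported_polys up_closed_pow_exps up_closed_up_closure)
  also have "\<dots> = supported_polys (\<Union>k\<in>{k. 1 \<le> k \<and> k \<le> m \<and> k < n}. ?V k)"
  proof -
    have "up_closed n U" if "U \<in> ?V ` {k. 1 \<le> k \<and> k \<le> m \<and> k < n}" for U
      using that up_closed_set_plus[OF up_closed_pow_exps up_closed_up_closure] by blast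
    from ideal_gen_Union_supported_polys[where \<U> = "?V ` {k. 1 \<le> k \<and> k \<le> m \<and> k < n}", OF this]
    show ?thesis
      by (simp add: image_image)
  qed
  also have "\<dots> = supported_polys (up_closure n (colon_exps n (gen_exps m)))"
    by (rule arg_cong[where f = supported_polys, OF up_closure_colon_gen_exps[OF \<open>1 \<le> m\<close>, symmetric]])
  also have "\<dots> = soc n d ?I m"
    by (rule soc_plp_ideal[symmetric])
  finally show "soc n d ?I m = ideal_gen n (\<Union>k\<in>{k. 1 \<le> k \<and> k \<le> m \<and> k < n}.
      ideal_mult n (ideal_pow n ?I (m - k)) (soc n d ?I k))"
    by (rule sym)
qed

lemma Soc_gen_below_plp_ideal: "Soc_gen_below n (plp_ideal n b \<alpha> \<beta> :: 'k::field mpoly set) n"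
  unfolding Soc_gen_below_def
proof (intro allI impI)
  fix m :: nat assume "1 \<le> m"
  let ?V = "\<lambda>k. pow_exps (m - k) + colon_exps n (pow_exps k)"
  let ?I = "plp_ideal n b \<alpha> \<beta> :: 'k mpoly set"
  have "ideal_gen n (ideal_pow n ?I m \<union> (\<Union>k\<in>{k. 1 \<le> k \<and> k \<le> m \<and> k < n}.
      ideal_mult n (ideal_pow n ?I (m - k)) (ideal_colon n (ideal_pow n ?I k) (max_ideal n)))) =
      ideal_gen n (supported_polys (pow_exps m) \<union> (\<Union>k\<in>{k. 1 \<le> k \<and> k \<le> m \<and> k < n}. supported_polys (?V k)))"
    by (simp add: ideal_pow_plp_ideal ideal_colon_max_ideal ideal_mult_supported_polys up_closed_pow_exps
        up_closed_colon_exps)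
  also have "\<dots> = supported_polys (pow_exps m \<union> (\<Union>k\<in>{k. 1 \<le> k \<and> k \<le> m \<and> k < n}. ?V k))"
  proof -
    have "up_closed n U" if "U \<in> insert (pow_exps m) (?V ` {k. 1 \<le> k \<and> k \<le> m \<and> k < n})" for U
      using that up_closed_pow_exps up_closed_set_plus[OF up_closed_pow_exps up_closed_colon_exps[OF up_closed_pow_exps]]
      by blast
    from ideal_gen_Union_supported_polys[where \<U> = "insert (pow_exps m) (?V ` {k. 1 \<le> k \<and> k \<le> m \<and> k < n})", OF this]
    show ?thesis
      by (simp add: image_image)
  qed
  also have "\<dots> = supported_polys (colon_exps n (pow_exps m))"
    by (rule arg_cong[where f = supported_polys, OF colon_pow_exps[OF \<open>1 \<le> m\<close>, symmetric]])
  also have "\<dots> = ideal_colon n (ideal_pow n ?I m) (max_ideal n)"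
    by (rule ideal_colon_plp_ideal[symmetric])
  finally show "ideal_colon n (ideal_pow n ?I m) (max_ideal n) = ideal_gen n (ideal_pow n ?I m \<union>
      (\<Union>k\<in>{k. 1 \<le> k \<and> k \<le> m \<and> k < n}.
        ideal_mult n (ideal_pow n ?I (m - k)) (ideal_colon n (ideal_pow n ?I k) (max_ideal n))))"
    by (rule sym)
qed

end

theorem theorem3p7:
  fixes n d :: nat and b \<alpha> \<beta> :: "nat \<Rightarrow> nat" and I :: "'k::field mpoly set"
  assumes "n \<ge> 1"
    and "\<And>i. i + 1 < n \<Longrightarrow> \<alpha> i \<le> \<alpha> (i + 1)"
    and "\<And>i. i + 1 < n \<Longrightarrow> \<beta> i \<le> \<beta> (i + 1)"
    and "\<alpha> (n - 1) = d" and "\<beta> (n - 1) = d"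
    and "\<And>i. i < n \<Longrightarrow> \<alpha> i \<le> \<beta> i"
    and "\<alpha> 0 = 0" and "\<beta> 0 = b 0"
    and "I = plp_ideal n b \<alpha> \<beta>"
  shows "Soc_star_gen_below n d I n \<and> Soc_gen_below n I n"
proof -
  interpret plp n b \<alpha> \<beta> d
    using assms(1,2,4-7) by unfold_locales auto
  show ?thesis
    using Soc_star_gen_below_plp_ideal Soc_gen_below_plp_ideal assms(9) by simp
qed

end
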